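(* Let $p$ be an odd prime and $a$ an integer with $1<a<p$. Then there exists a $PComS\!\left(p,\tfrac{p-1}{2},\,2a(a-p)+\tfrac{p(p-1)}{2}\right)$ all of whose members are classes of sequences in $\mathcal{G}_p(a)$.
   Context: $\mathbb{Z}_2^p$ is the set of sequences $X=(x_0,\dots,x_{p-1})$ with entries in $\{+1,-1\}$, indices mod $p$. $\mathcal{G}_p(a)$ is the set of $X\in\mathbb{Z}_2^p$ with exactly $a$ entries equal to $+1$. The periodic autocorrelation is $\mathsf{P}_X(k)=\sum_{i=0}^{p-1}x_ix_{i+k}$; it depends only on the cyclic-shift class $X_C$. A $PComS(n,q,c)$ is a list (repetitions allowed) of $q$ cyclic-shift classes $A_{1C},\dots,A_{qC}$ with $A_i\in\mathbb{Z}_2^n$ such that $\sum_{i=1}^q\mathsf{P}_{A_i}(k)=c$ for all $1\le k\le n-1$. *)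

theory Defs
  imports Main "HOL-Computational_Algebra.Primes"
begin

definition Z2seq :: "nat \<Rightarrow> int list set" where
  "Z2seq p = {X. length X = p \<and> set X \<subseteq> {1, -1}}"

definition Gp :: "nat \<Rightarrow> nat \<Rightarrow> int list set" where
  "Gp p a = {X \<in> Z2seq p. length (filter (\<lambda>x. x = 1) X) = a}"

definition paf :: "int list \<Rightarrow> nat \<Rightarrow> int" where
  "paf X k = (\<Sum>i<length X. X ! i * X ! ((i + k) mod length X))"

definition cyc_class :: "int list \<Rightarrow> int list set" where
  "cyc_class X = {rotate k X | k. True}"

text \<open>The autocorrelation of a class
  is that of any representative (it is shift-invariant).\<close>
definition PComS :: "nat \<Rightarrow> nat \<Rightarrow> int \<Rightarrow> int list set list \<Rightarrow> bool" where
  "PComS n q c Cs \<longleftrightarrow>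
     length Cs = q \<and>
     (\<exists>As. length As = q \<and> (\<forall>i<q. As ! i \<in> Z2seq n \<and> Cs ! i = cyc_class (As ! i)) \<and>
        (\<forall>k. 1 \<le> k \<and> k \<le> n - 1 \<longrightarrow> (\<Sum>i<q. paf (As ! i) k) = c))"

end

theory Submission
  imports Defs "HOL-Number_Theory.Cong"
begin

text \<open>Let \<open>f\<close> be the \<open>\<plusminus>1\<close> sequence of length \<open>p\<close> whose first \<open>a\<close> entries are \<open>+1\<close>, and take
  as members of the family its decimations \<open>i \<mapsto> f (s i mod p)\<close> for \<open>s = 1, \<dots>, (p - 1)/2\<close>.
  Decimation by \<open>s\<close> turns the autocorrelation at shift \<open>k\<close> into that of \<open>f\<close> at shift \<open>s k\<close>, and
  as \<open>s\<close> runs over half the nonzero residues, \<open>\<plusminus>s k\<close> runs over all of them exactly once.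
  Since autocorrelations are even in the shift, the sum over the family is half the sum of all
  off-peak autocorrelations of \<open>f\<close>, which is \<open>((2a - p)\<^sup>2 - p) / 2\<close>.\<close>

definition pacf :: "nat \<Rightarrow> (nat \<Rightarrow> 'a::comm_ring_1) \<Rightarrow> nat \<Rightarrow> 'a" where
  "pacf p f k = (\<Sum>i<p. f i * f ((i + k) mod p))"

definition step_seq :: "nat \<Rightarrow> nat \<Rightarrow> int" where
  "step_seq a j = (if j < a then 1 else -1)"

definition decimation :: "nat \<Rightarrow> nat \<Rightarrow> (nat \<Rightarrow> 'a) \<Rightarrow> 'a list" where
  "decimation p s f = map (\<lambda>i. f (s * i mod p)) [0..<p]"

lemma bij_betw_affine_mod:
  fixes s m p :: nat
  assumes "coprime s p"
  shows "bij_betw (\<lambda>i. (s * i + m) mod p) {..<p} {..<p}"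
proof (cases "p = 0")
  case False
  have "inj_on (\<lambda>i. (s * i + m) mod p) {..<p}"
  proof (rule inj_onI)
    fix i j assume i: "i \<in> {..<p}" and j: "j \<in> {..<p}"
      and eq: "(s * i + m) mod p = (s * j + m) mod p"
    from eq have "[s * i = s * j] (mod p)"
      by (simp add: cong_def[symmetric] cong_add_rcancel_nat)
    then have "[i = j] (mod p)"
      using assms by (simp add: cong_mult_lcancel_nat)
    then show "i = j"
      using i j by (simp add: cong_def)
  qed
  moreover have "(\<lambda>i. (s * i + m) mod p) ` {..<p} \<subseteq> {..<p}"
    using False by auto
  ultimately show ?thesis
    by (simp add: bij_betw_def endo_inj_surj)
qed (simp add: bij_betw_def)

lemma bij_betw_mult_mod:
  fixes s p :: nat
  assumes "coprime s p"
  shows "bij_betw (\<lambda>i. s * i mod p) {..<p} {..<p}"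
  using bij_betw_affine_mod[OF assms, of 0] by simp

lemma bij_betw_add_mod: "bij_betw (\<lambda>i. (i + m) mod p) {..<p} {..<p}"
  for m p :: nat
  using bij_betw_affine_mod[of 1 p m] by simp

lemma coprime_less_prime:
  fixes s p :: nat
  assumes "prime p" "0 < s" "s < p"
  shows "coprime s p"
  using assms by (simp add: coprime_commute nat_dvd_not_less prime_imp_coprime)

lemma pacf_decimation:
  assumes "coprime s p"
  shows "pacf p (\<lambda>i. f (s * i mod p)) k = pacf p f (s * k mod p)"
proof -
  have "pacf p (\<lambda>i. f (s * i mod p)) k
      = (\<Sum>i<p. (\<lambda>j. f j * f ((j + s * k mod p) mod p)) (s * i mod p))"
    unfolding pacf_def by (simp add: mod_mult_right_eq distrib_left mod_add_eq)
  also have "\<dots> = pacf p f (s * k mod p)"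
    unfolding pacf_def by (rule sum.reindex_bij_betw[OF bij_betw_mult_mod[OF assms]])
  finally show ?thesis .
qed

lemma pacf_symmetric:
  assumes "[j + k = 0] (mod p)"
  shows "pacf p f j = pacf p f k"
proof -
  have "pacf p f j = (\<Sum>i<p. (\<lambda>i. f i * f ((i + j) mod p)) ((i + k) mod p))"
    unfolding pacf_def by (rule sum.reindex_bij_betw[symmetric, OF bij_betw_add_mod])
  also have "\<dots> = pacf p f k"
    unfolding pacf_def
  proof (intro sum.cong refl)
    fix i assume "i \<in> {..<p}"
    have "((i + k) mod p + j) mod p = (i + (j + k) mod p) mod p"
      by (simp add: mod_add_left_eq mod_add_right_eq ac_simps)
    also have "\<dots> = i"
      using assms \<open>i \<in> {..<p}\<close> by (simp add: cong_def)
    finally show "(\<lambda>i. f i * f ((i + j) mod p)) ((i + k) mod p) = f i * f ((i + k) mod p)"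
      by (simp add: mult.commute)
  qed
  finally show ?thesis .
qed

lemma sum_pacf: "(\<Sum>k<p. pacf p f k) = (\<Sum>i<p. f i)\<^sup>2"
proof -
  have "(\<Sum>k<p. pacf p f k) = (\<Sum>i<p. f i * (\<Sum>k<p. f ((k + i) mod p)))"
    unfolding pacf_def by (subst sum.swap) (simp add: sum_distrib_left add.commute)
  also have "\<dots> = (\<Sum>i<p. f i * (\<Sum>j<p. f j))"
    by (simp only: sum.reindex_bij_betw[OF bij_betw_add_mod])
  finally show ?thesis
    by (simp add: power2_eq_square sum_distrib_right)
qed

lemma pacf_0_pm_one:
  assumes "\<And>i. i < p \<Longrightarrow> f i \<in> {1, -1}"
  shows "pacf p f 0 = of_nat p"
proof -
  have "f i * f i = 1" if "i < p" for i
    using assms[OF that] by auto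
  then show ?thesis
    unfolding pacf_def by simp
qed

lemma sum_half_range_symmetric:
  fixes G :: "nat \<Rightarrow> 'a::comm_semiring_1"
  assumes "odd p" and sym: "\<And>m. 0 < m \<Longrightarrow> m < p \<Longrightarrow> G (p - m) = G m"
  shows "2 * (\<Sum>s=1..(p - 1) div 2. G s) = (\<Sum>m\<in>{1..<p}. G m)"
proof -
  define h where "h = (p - 1) div 2"
  have p: "p = 2 * h + 1"
    using assms(1) unfolding h_def by presburger
  have "(\<Sum>m\<in>{h+1..<p}. G m) = (\<Sum>s=1..h. G s)"
    by (rule sum.reindex_bij_witness[of _ "\<lambda>s. p - s" "\<lambda>s. p - s"]) (use p sym in auto)
  moreover have "{1..<p} = {1..h} \<union> {h+1..<p}" "{1..h} \<inter> {h+1..<p} = {}"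
    using p by auto
  ultimately have "(\<Sum>m\<in>{1..<p}. G m) = (\<Sum>s=1..h. G s) + (\<Sum>s=1..h. G s)"
    by (simp add: sum.union_disjoint)
  then show ?thesis
    unfolding h_def by (simp add: mult_2)
qed

lemma sum_nonzero_residues_mult:
  fixes G :: "nat \<Rightarrow> 'a::comm_monoid_add"
  assumes "coprime k p"
  shows "(\<Sum>s\<in>{1..<p}. G (s * k mod p)) = (\<Sum>m\<in>{1..<p}. G m)"
proof (cases "p = 0")
  case False
  have "bij_betw (\<lambda>s. k * s mod p) ({..<p} - {0}) ({..<p} - {0})"
    by (rule bij_betw_DiffI[OF bij_betw_mult_mod[OF assms]]) (use False in auto)
  moreover have "{..<p} - {0} = {1..<p}"
    by auto
  ultimately show ?thesis
    using sum.reindex_bij_betw[of _ "{1..<p}" "{1..<p}" G] by (simp add: mult.commute)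
qed simp

lemma sum_half_decimations_pacf:
  fixes f :: "nat \<Rightarrow> 'a::comm_ring_1"
  assumes "prime p" "odd p" "0 < k" "k < p"
  shows "2 * (\<Sum>s=1..(p - 1) div 2. pacf p f (s * k mod p)) = (\<Sum>i<p. f i)\<^sup>2 - pacf p f 0"
proof -
  have "2 * (\<Sum>s=1..(p - 1) div 2. pacf p f (s * k mod p)) = (\<Sum>s\<in>{1..<p}. pacf p f (s * k mod p))"
  proof (rule sum_half_range_symmetric[OF assms(2)])
    fix m assume "0 < m" "m < p"
    then have "(p - m) * k + m * k = p * k"
      by (simp add: add_mult_distrib[symmetric])
    then have "[(p - m) * k mod p + m * k mod p = 0] (mod p)"
      by (simp add: cong_def mod_add_eq)
    then show "pacf p f ((p - m) * k mod p) = pacf p f (m * k mod p)"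
      by (rule pacf_symmetric)
  qed
  also have "\<dots> = (\<Sum>m\<in>{1..<p}. pacf p f m)"
    by (rule sum_nonzero_residues_mult[OF coprime_less_prime[OF assms(1,3,4)]])
  also have "\<dots> = (\<Sum>m<p. pacf p f m) - pacf p f 0"
    using assms(3,4) by (simp add: atLeast0LessThan[symmetric] sum.atLeast_Suc_lessThan)
  finally show ?thesis
    by (simp add: sum_pacf)
qed

lemma paf_decimation:
  assumes "coprime s p"
  shows "paf (decimation p s f) k = pacf p f (s * k mod p)"
proof -
  have "paf (decimation p s f) k = pacf p (\<lambda>i. f (s * i mod p)) k"
    unfolding paf_def pacf_def decimation_def by (intro sum.cong refl) auto
  then show ?thesis
    using pacf_decimation[OF assms] by simp
qed

lemma sum_step_seq:
  assumes "a \<le> p"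
  shows "(\<Sum>j<p. step_seq a j) = 2 * int a - int p"
proof -
  have "(\<Sum>j<p. step_seq a j) = (\<Sum>j<p. 2 * of_bool (j < a) - 1)"
    unfolding step_seq_def by (intro sum.cong refl) auto
  also have "\<dots> = 2 * int (card ({..<p} \<inter> {j. j < a})) - int p"
    by (simp add: sum_subtractf sum_distrib_left[symmetric])
  also have "{..<p} \<inter> {j. j < a} = {..<a}"
    using assms by auto
  finally show ?thesis
    by simp
qed

lemma decimation_step_seq_in_Gp:
  assumes "coprime s p" "a \<le> p"
  shows "decimation p s (step_seq a) \<in> Gp p a"
proof -
  have "int (length (filter (\<lambda>x. x = 1) (decimation p s (step_seq a))))
      = int (card ({..<p} \<inter> {i. s * i mod p < a}))"
    unfolding length_filter_conv_card decimation_def step_seq_def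
    by (intro arg_cong[where f = "\<lambda>A. int (card A)"]) (auto split: if_splits)
  also have "\<dots> = (\<Sum>i<p. of_bool (s * i mod p < a))"
    by simp
  also have "\<dots> = (\<Sum>j<p. of_bool (j < a))"
    by (rule sum.reindex_bij_betw[OF bij_betw_mult_mod[OF assms(1)]])
  also have "\<dots> = int a"
  proof -
    have "{..<p} \<inter> {j. j < a} = {..<a}"
      using assms(2) by auto
    then show ?thesis
      by simp
  qed
  finally show ?thesis
    unfolding Gp_def Z2seq_def decimation_def step_seq_def by auto
qed

lemma sum_paf_decimations_step_seq:
  assumes "prime p" "odd p" "a \<le> p" "0 < k" "k < p"
  shows "2 * (\<Sum>s=1..(p - 1) div 2. paf (decimation p s (step_seq a)) k)
    = (2 * int a - int p)\<^sup>2 - int p"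
proof -
  have "paf (decimation p s (step_seq a)) k = pacf p (step_seq a) (s * k mod p)"
    if "s \<in> {1..(p - 1) div 2}" for s
    using that assms(1,2) by (intro paf_decimation coprime_less_prime) auto
  moreover have "pacf p (step_seq a) 0 = int p"
    by (rule pacf_0_pm_one) (simp add: step_seq_def)
  ultimately show ?thesis
    using sum_half_decimations_pacf[OF assms(1,2,4,5), of "step_seq a"] sum_step_seq[OF assms(3)]
    by simp
qed

lemma PComS_map_cyc_class:
  assumes "length As = q" "set As \<subseteq> Z2seq n"
    and "\<And>k. 1 \<le> k \<Longrightarrow> k \<le> n - 1 \<Longrightarrow> (\<Sum>i<q. paf (As ! i) k) = c"
  shows "PComS n q c (map cyc_class As)"
  unfolding PComS_def using assms by (auto intro!: exI[of _ As])

theorem theorem10: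
  fixes p a :: nat
  assumes "prime p" and "odd p" and "1 < a" and "a < p"
  shows "\<exists>Cs. PComS p ((p - 1) div 2)
                 (2 * int a * (int a - int p) + int p * (int p - 1) div 2) Cs
            \<and> (\<forall>C\<in>set Cs. \<exists>X\<in>Gp p a. C = cyc_class X)"
proof -
  define h where "h = (p - 1) div 2"
  define As where "As = map (\<lambda>i. decimation p (Suc i) (step_seq a)) [0..<h]"
  have p: "p = 2 * h + 1"
    using assms(1,2) prime_gt_0_nat unfolding h_def by presburger
  have members: "set As \<subseteq> Gp p a"
    unfolding As_def using assms p
    by (auto intro!: decimation_step_seq_in_Gp coprime_less_prime)
  have "(\<Sum>i<h. paf (As ! i) k) = 2 * int a * (int a - int p) + int p * (int p - 1) div 2"
    if "1 \<le> k" "k \<le> p - 1" for k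
  proof -
    have "(\<Sum>i<h. paf (As ! i) k) = (\<Sum>s=1..h. paf (decimation p s (step_seq a)) k)"
      unfolding As_def by (simp add: sum.atLeast1_atMost_eq)
    then have "2 * (\<Sum>i<h. paf (As ! i) k) = (2 * int a - int p)\<^sup>2 - int p"
      using sum_paf_decimations_step_seq[OF assms(1,2), of a k] assms(4) that unfolding h_def by simp
    moreover have "int p * (int p - 1) div 2 = int p * int h"
      using p by simp
    ultimately show ?thesis
      using p by (simp add: power2_eq_square algebra_simps)
  qed
  then have "PComS p h (2 * int a * (int a - int p) + int p * (int p - 1) div 2) (map cyc_class As)"
    using members by (intro PComS_map_cyc_class) (auto simp: As_def Gp_def)
  with members show ?thesis
    unfolding h_def by (intro exI[of _ "map cyc_class As"]) auto
qed

end
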